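(* In the category $\mathbf{Lens}$, the class of all morphisms that are left orthogonal to every monomorphism is exactly the class of all epimorphisms.
   Context: A lens $F\colon \mathbf{A}\to\mathbf{B}$ between small categories consists of a functor $F\colon\mathbf{A}\to\mathbf{B}$ (the get functor) together with, for each object $A$ of $\mathbf{A}$, a function $\varphi_{F,A}$ from the set of morphisms of $\mathbf{B}$ with domain $FA$ to the set of morphisms of $\mathbf{A}$ with domain $A$, such that: $F(\varphi_{F,A}b)=b$; $\varphi_{F,A}(\mathrm{id}_{FA})=\mathrm{id}_A$; and $\varphi_{F,A}(b'\circ b)=\varphi_{F,A'}(b')\circ\varphi_{F,A}(b)$ whenever $b$ has domain $FA$, $A'$ is the codomain of $\varphi_{F,A}b$, and $b'$ has domain $FA'$. $\mathbf{Lens}$ is the category of small categories and lenses, with composite of $F\colon\mathbf{A}\to\mathbf{B}$, $G\colon\mathbf{B}\to\mathbf{C}$ having get functor $G\circ F$ and puts $\varphi_{G\circ F,A}(c)=\varphi_{F,A}(\varphi_{G,FA}(c))$. A morphism $e\colon A\to B$ is left orthogonal to $m\colon C\to D$ if for all $f\colon A\to C$ and $g\colon B\to D$ with $g\circ e=m\circ f$ there is a unique $h\colon B\to C$ with $h\circ e=f$ and $m\circ h=g$. *)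

theory Defs
  imports Main
begin

text \<open>Small categories: all objects and arrows live in a fixed universe type 'u
  (playing the role of a Grothendieck universe).  Categories and lenses are
  represented extensionally (all data is undefined outside the carriers), so that
  HOL equality is equality of categories / lenses.\<close>

record 'u cat =
  Obj  :: "'u set"
  Arr  :: "'u set"
  Dom  :: "'u \<Rightarrow> 'u"
  Cod  :: "'u \<Rightarrow> 'u"
  Idn  :: "'u \<Rightarrow> 'u"
  Comp :: "'u \<Rightarrow> 'u \<Rightarrow> 'u"   (* Comp C g f = g \<circ> f *)

definition category :: "'u cat \<Rightarrow> bool" where
  "category C \<longleftrightarrow>
     (\<forall>f\<in>Arr C. Dom C f \<in> Obj C \<and> Cod C f \<in> Obj C) \<and>
     (\<forall>x\<in>Obj C. Idn C x \<in> Arr C \<and> Dom C (Idn C x) = x \<and> Cod C (Idn C x) = x) \<and>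
     (\<forall>f\<in>Arr C. \<forall>g\<in>Arr C. Cod C f = Dom C g \<longrightarrow>
         Comp C g f \<in> Arr C \<and> Dom C (Comp C g f) = Dom C f \<and> Cod C (Comp C g f) = Cod C g) \<and>
     (\<forall>f\<in>Arr C. Comp C (Idn C (Cod C f)) f = f \<and> Comp C f (Idn C (Dom C f)) = f) \<and>
     (\<forall>f\<in>Arr C. \<forall>g\<in>Arr C. \<forall>h\<in>Arr C. Cod C f = Dom C g \<and> Cod C g = Dom C h \<longrightarrow>
         Comp C h (Comp C g f) = Comp C (Comp C h g) f) \<and>
     (\<forall>f. f \<notin> Arr C \<longrightarrow> Dom C f = undefined \<and> Cod C f = undefined) \<and>
     (\<forall>x. x \<notin> Obj C \<longrightarrow> Idn C x = undefined) \<and>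
     (\<forall>f g. \<not> (f \<in> Arr C \<and> g \<in> Arr C \<and> Cod C f = Dom C g) \<longrightarrow> Comp C g f = undefined)"

text \<open>A lens: get functor (FO on objects, FA on arrows) and put functions
  Put A b = \<phi>_{F,A}(b).\<close>

record 'u lens =
  Src :: "'u cat"
  Tgt :: "'u cat"
  FO  :: "'u \<Rightarrow> 'u"
  FA  :: "'u \<Rightarrow> 'u"
  Put :: "'u \<Rightarrow> 'u \<Rightarrow> 'u"

definition is_lens :: "'u lens \<Rightarrow> bool" where
  "is_lens L \<longleftrightarrow>
     (let A = Src L; B = Tgt L in
       category A \<and> category B \<and>
       \<comment> \<open>get is a functor\<close>
       (\<forall>x\<in>Obj A. FO L x \<in> Obj B) \<and>
       (\<forall>f\<in>Arr A. FA L f \<in> Arr B \<and> Dom B (FA L f) = FO L (Dom A f) \<and> Cod B (FA L f) = FO L (Cod A f)) \<and>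
       (\<forall>x\<in>Obj A. FA L (Idn A x) = Idn B (FO L x)) \<and>
       (\<forall>f\<in>Arr A. \<forall>g\<in>Arr A. Cod A f = Dom A g \<longrightarrow> FA L (Comp A g f) = Comp B (FA L g) (FA L f)) \<and>
       \<comment> \<open>put\<close>
       (\<forall>x\<in>Obj A. \<forall>b\<in>Arr B. Dom B b = FO L x \<longrightarrow>
          Put L x b \<in> Arr A \<and> Dom A (Put L x b) = x \<and> FA L (Put L x b) = b) \<and>
       (\<forall>x\<in>Obj A. Put L x (Idn B (FO L x)) = Idn A x) \<and>
       (\<forall>x\<in>Obj A. \<forall>b\<in>Arr B. \<forall>b'\<in>Arr B. Dom B b = FO L x \<and> Dom B b' = FO L (Cod A (Put L x b)) \<longrightarrow>
          Put L x (Comp B b' b) = Comp A (Put L (Cod A (Put L x b)) b') (Put L x b)) \<and>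
       \<comment> \<open>extensionality\<close>
       (\<forall>x. x \<notin> Obj A \<longrightarrow> FO L x = undefined) \<and>
       (\<forall>f. f \<notin> Arr A \<longrightarrow> FA L f = undefined) \<and>
       (\<forall>x b. \<not> (x \<in> Obj A \<and> b \<in> Arr B \<and> Dom B b = FO L x) \<longrightarrow> Put L x b = undefined))"

definition lcomp :: "'u lens \<Rightarrow> 'u lens \<Rightarrow> 'u lens" where
  "lcomp G F =
     \<lparr> Src = Src F, Tgt = Tgt G,
       FO = (\<lambda>x. if x \<in> Obj (Src F) then FO G (FO F x) else undefined),
       FA = (\<lambda>f. if f \<in> Arr (Src F) then FA G (FA F f) else undefined),
       Put = (\<lambda>x c. if x \<in> Obj (Src F) \<and> c \<in> Arr (Tgt G) \<and> Dom (Tgt G) c = FO G (FO F x)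
                     then Put F x (Put G (FO F x) c) else undefined) \<rparr>"

definition lens_mono :: "'u lens \<Rightarrow> bool" where
  "lens_mono m \<longleftrightarrow> is_lens m \<and>
     (\<forall>f g. is_lens f \<and> is_lens g \<and> Src f = Src g \<and> Tgt f = Src m \<and> Tgt g = Src m \<and>
            lcomp m f = lcomp m g \<longrightarrow> f = g)"

definition lens_epi :: "'u lens \<Rightarrow> bool" where
  "lens_epi e \<longleftrightarrow> is_lens e \<and>
     (\<forall>f g. is_lens f \<and> is_lens g \<and> Src f = Tgt e \<and> Src g = Tgt e \<and> Tgt f = Tgt g \<and>
            lcomp f e = lcomp g e \<longrightarrow> f = g)"

definition left_orth :: "'u lens \<Rightarrow> 'u lens \<Rightarrow> bool" where
  "left_orth e m \<longleftrightarrow> is_lens e \<and> is_lens m \<and>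
     (\<forall>f g. is_lens f \<and> is_lens g \<and> Src f = Src e \<and> Tgt f = Src m \<and>
            Src g = Tgt e \<and> Tgt g = Tgt m \<and> lcomp g e = lcomp m f \<longrightarrow>
        (\<exists>!h. is_lens h \<and> Src h = Tgt e \<and> Tgt h = Src m \<and> lcomp h e = f \<and> lcomp m h = g))"

end

theory Submission
  imports Defs
begin

text \<open>Since 'u is infinite, 'u \<times> 'u and 'u \<times> bool embed into 'u, so kernel pairs and glued
  copies of categories can be formed inside the universe. With them one sees that the monomorphisms
  of Lens are the lenses injective on arrows (a mono equalises the two projections of its kernel
  pair) and the epimorphisms are the lenses surjective on objects (an epi cannot separate the two
  embeddings of its codomain into two copies of it glued along its image).

  A lens e surjective on objects is left orthogonal to every lens m injective on arrows: a diagonal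
  is determined on objects by surjectivity and on arrows by lifting along m, whose put inverts its
  get; it is unique because e is epi. Conversely, the image of any lens e is closed under outgoing
  arrows, so the inclusion of the full subcategory on it is a mono through which e factors, and a
  diagonal for the resulting square shows that this image is everything.\<close>

locale category_laws =
  fixes C :: "'v cat"
  assumes Dom_closed: "f \<in> Arr C \<Longrightarrow> Dom C f \<in> Obj C"
    and Cod_closed: "f \<in> Arr C \<Longrightarrow> Cod C f \<in> Obj C"
    and Idn_closed: "x \<in> Obj C \<Longrightarrow> Idn C x \<in> Arr C"
    and Dom_Idn: "x \<in> Obj C \<Longrightarrow> Dom C (Idn C x) = x"
    and Cod_Idn: "x \<in> Obj C \<Longrightarrow> Cod C (Idn C x) = x"
    and Comp_closed: "f \<in> Arr C \<Longrightarrow> g \<in> Arr C \<Longrightarrow> Cod C f = Dom C g \<Longrightarrow> Comp C g f \<in> Arr C"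
    and Dom_Comp: "f \<in> Arr C \<Longrightarrow> g \<in> Arr C \<Longrightarrow> Cod C f = Dom C g \<Longrightarrow> Dom C (Comp C g f) = Dom C f"
    and Cod_Comp: "f \<in> Arr C \<Longrightarrow> g \<in> Arr C \<Longrightarrow> Cod C f = Dom C g \<Longrightarrow> Cod C (Comp C g f) = Cod C g"
    and Comp_Idn_left: "f \<in> Arr C \<Longrightarrow> Comp C (Idn C (Cod C f)) f = f"
    and Comp_Idn_right: "f \<in> Arr C \<Longrightarrow> Comp C f (Idn C (Dom C f)) = f"
    and Comp_assoc: "f \<in> Arr C \<Longrightarrow> g \<in> Arr C \<Longrightarrow> h \<in> Arr C \<Longrightarrow> Cod C f = Dom C g \<Longrightarrow>
      Cod C g = Dom C h \<Longrightarrow> Comp C h (Comp C g f) = Comp C (Comp C h g) f"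
begin

lemmas laws = Dom_closed Cod_closed Idn_closed Dom_Idn Cod_Idn Comp_closed Dom_Comp Cod_Comp
  Comp_Idn_left Comp_Idn_right Comp_assoc

end

lemma categoryI:
  assumes "category_laws C" "\<And>f. f \<notin> Arr C \<Longrightarrow> Dom C f = undefined \<and> Cod C f = undefined"
    "\<And>x. x \<notin> Obj C \<Longrightarrow> Idn C x = undefined"
    "\<And>f g. \<not> (f \<in> Arr C \<and> g \<in> Arr C \<and> Cod C f = Dom C g) \<Longrightarrow> Comp C g f = undefined"
  shows "category C"
proof -
  interpret category_laws C by fact
  show ?thesis
    unfolding category_def using assms(2-4) by (intro conjI ballI allI impI) (simp_all add: laws)
qed

lemma category_imp_laws: "category C \<Longrightarrow> category_laws C"
  by (rule category_laws.intro) (simp_all add: category_def)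

lemmas cat_Dom = category_laws.Dom_closed[OF category_imp_laws]
  and cat_Cod = category_laws.Cod_closed[OF category_imp_laws]
  and cat_Idn = category_laws.Idn_closed[OF category_imp_laws]
  and cat_Dom_Idn = category_laws.Dom_Idn[OF category_imp_laws]
  and cat_Cod_Idn = category_laws.Cod_Idn[OF category_imp_laws]
  and cat_Comp = category_laws.Comp_closed[OF category_imp_laws]
  and cat_Dom_Comp = category_laws.Dom_Comp[OF category_imp_laws]
  and cat_Cod_Comp = category_laws.Cod_Comp[OF category_imp_laws]
  and cat_Comp_Idn_left = category_laws.Comp_Idn_left[OF category_imp_laws]
  and cat_Comp_Idn_right = category_laws.Comp_Idn_right[OF category_imp_laws]
  and cat_Comp_assoc = category_laws.Comp_assoc[OF category_imp_laws]

lemmas cat_simps = cat_Dom cat_Cod cat_Idn cat_Dom_Idn cat_Cod_Idn cat_Comp cat_Dom_Comp cat_Cod_Comp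
  cat_Comp_Idn_left cat_Comp_Idn_right

lemma
  assumes "is_lens L"
  shows lens_Src: "category (Src L)"
    and lens_Tgt: "category (Tgt L)"
    and lens_FO: "x \<in> Obj (Src L) \<Longrightarrow> FO L x \<in> Obj (Tgt L)"
    and lens_FA: "f \<in> Arr (Src L) \<Longrightarrow> FA L f \<in> Arr (Tgt L)"
    and lens_Dom_FA: "f \<in> Arr (Src L) \<Longrightarrow> Dom (Tgt L) (FA L f) = FO L (Dom (Src L) f)"
    and lens_Cod_FA: "f \<in> Arr (Src L) \<Longrightarrow> Cod (Tgt L) (FA L f) = FO L (Cod (Src L) f)"
    and lens_FA_Idn: "x \<in> Obj (Src L) \<Longrightarrow> FA L (Idn (Src L) x) = Idn (Tgt L) (FO L x)"
    and lens_FA_Comp: "f \<in> Arr (Src L) \<Longrightarrow> g \<in> Arr (Src L) \<Longrightarrow> Cod (Src L) f = Dom (Src L) g \<Longrightarrow>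
      FA L (Comp (Src L) g f) = Comp (Tgt L) (FA L g) (FA L f)"
    and lens_Put: "x \<in> Obj (Src L) \<Longrightarrow> b \<in> Arr (Tgt L) \<Longrightarrow> Dom (Tgt L) b = FO L x \<Longrightarrow>
      Put L x b \<in> Arr (Src L)"
    and lens_Dom_Put: "x \<in> Obj (Src L) \<Longrightarrow> b \<in> Arr (Tgt L) \<Longrightarrow> Dom (Tgt L) b = FO L x \<Longrightarrow>
      Dom (Src L) (Put L x b) = x"
    and lens_FA_Put: "x \<in> Obj (Src L) \<Longrightarrow> b \<in> Arr (Tgt L) \<Longrightarrow> Dom (Tgt L) b = FO L x \<Longrightarrow>
      FA L (Put L x b) = b"
    and lens_Put_Idn: "x \<in> Obj (Src L) \<Longrightarrow> Put L x (Idn (Tgt L) (FO L x)) = Idn (Src L) x"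
    and lens_Put_Comp: "x \<in> Obj (Src L) \<Longrightarrow> b \<in> Arr (Tgt L) \<Longrightarrow> b' \<in> Arr (Tgt L) \<Longrightarrow>
      Dom (Tgt L) b = FO L x \<Longrightarrow> Dom (Tgt L) b' = FO L (Cod (Src L) (Put L x b)) \<Longrightarrow>
      Put L x (Comp (Tgt L) b' b) = Comp (Src L) (Put L (Cod (Src L) (Put L x b)) b') (Put L x b)"
    and lens_FO_undefined: "x \<notin> Obj (Src L) \<Longrightarrow> FO L x = undefined"
    and lens_FA_undefined: "f \<notin> Arr (Src L) \<Longrightarrow> FA L f = undefined"
    and lens_Put_undefined: "\<not> (x \<in> Obj (Src L) \<and> b \<in> Arr (Tgt L) \<and> Dom (Tgt L) b = FO L x) \<Longrightarrow>
      Put L x b = undefined"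
  using assms by (simp_all add: is_lens_def Let_def)

lemma lensI:
  assumes "category (Src L)" "category (Tgt L)"
    "\<And>x. x \<in> Obj (Src L) \<Longrightarrow> FO L x \<in> Obj (Tgt L)"
    "\<And>f. f \<in> Arr (Src L) \<Longrightarrow> FA L f \<in> Arr (Tgt L)"
    "\<And>f. f \<in> Arr (Src L) \<Longrightarrow> Dom (Tgt L) (FA L f) = FO L (Dom (Src L) f)"
    "\<And>f. f \<in> Arr (Src L) \<Longrightarrow> Cod (Tgt L) (FA L f) = FO L (Cod (Src L) f)"
    "\<And>x. x \<in> Obj (Src L) \<Longrightarrow> FA L (Idn (Src L) x) = Idn (Tgt L) (FO L x)"
    "\<And>f g. f \<in> Arr (Src L) \<Longrightarrow> g \<in> Arr (Src L) \<Longrightarrow> Cod (Src L) f = Dom (Src L) g \<Longrightarrow>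
       FA L (Comp (Src L) g f) = Comp (Tgt L) (FA L g) (FA L f)"
    "\<And>x b. x \<in> Obj (Src L) \<Longrightarrow> b \<in> Arr (Tgt L) \<Longrightarrow> Dom (Tgt L) b = FO L x \<Longrightarrow>
       Put L x b \<in> Arr (Src L)"
    "\<And>x b. x \<in> Obj (Src L) \<Longrightarrow> b \<in> Arr (Tgt L) \<Longrightarrow> Dom (Tgt L) b = FO L x \<Longrightarrow>
       Dom (Src L) (Put L x b) = x"
    "\<And>x b. x \<in> Obj (Src L) \<Longrightarrow> b \<in> Arr (Tgt L) \<Longrightarrow> Dom (Tgt L) b = FO L x \<Longrightarrow>
       FA L (Put L x b) = b"
    "\<And>x. x \<in> Obj (Src L) \<Longrightarrow> Put L x (Idn (Tgt L) (FO L x)) = Idn (Src L) x"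
    "\<And>x b b'. x \<in> Obj (Src L) \<Longrightarrow> b \<in> Arr (Tgt L) \<Longrightarrow> b' \<in> Arr (Tgt L) \<Longrightarrow>
       Dom (Tgt L) b = FO L x \<Longrightarrow> Dom (Tgt L) b' = FO L (Cod (Src L) (Put L x b)) \<Longrightarrow>
       Put L x (Comp (Tgt L) b' b) = Comp (Src L) (Put L (Cod (Src L) (Put L x b)) b') (Put L x b)"
    "\<And>x. x \<notin> Obj (Src L) \<Longrightarrow> FO L x = undefined"
    "\<And>f. f \<notin> Arr (Src L) \<Longrightarrow> FA L f = undefined"
    "\<And>x b. \<not> (x \<in> Obj (Src L) \<and> b \<in> Arr (Tgt L) \<and> Dom (Tgt L) b = FO L x) \<Longrightarrow> Put L x b = undefined"
  shows "is_lens L"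
  unfolding is_lens_def Let_def by (intro conjI ballI allI impI) (simp_all add: assms)

lemma lens_eqI:
  fixes L L' :: "'u lens"
  assumes "Src L = Src L'" "Tgt L = Tgt L'" "\<And>x. FO L x = FO L' x" "\<And>f. FA L f = FA L' f"
    "\<And>x b. Put L x b = Put L' x b"
  shows "L = L'"
  using assms by (intro lens.equality) (simp_all add: fun_eq_iff)

lemma lcomp_simps [simp]:
  "Src (lcomp G F) = Src F" "Tgt (lcomp G F) = Tgt G"
  "FO (lcomp G F) x = (if x \<in> Obj (Src F) then FO G (FO F x) else undefined)"
  "FA (lcomp G F) f = (if f \<in> Arr (Src F) then FA G (FA F f) else undefined)"
  "Put (lcomp G F) x c = (if x \<in> Obj (Src F) \<and> c \<in> Arr (Tgt G) \<and> Dom (Tgt G) c = FO G (FO F x)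
     then Put F x (Put G (FO F x) c) else undefined)"
  by (simp_all add: lcomp_def)

lemma lens_monoD:
  "lens_mono m \<Longrightarrow> is_lens f \<Longrightarrow> is_lens g \<Longrightarrow> Src f = Src g \<Longrightarrow> Tgt f = Src m \<Longrightarrow> Tgt g = Src m \<Longrightarrow>
    lcomp m f = lcomp m g \<Longrightarrow> f = g"
  unfolding lens_mono_def by blast

lemma lens_epiD:
  "lens_epi e \<Longrightarrow> is_lens f \<Longrightarrow> is_lens g \<Longrightarrow> Src f = Tgt e \<Longrightarrow> Src g = Tgt e \<Longrightarrow> Tgt f = Tgt g \<Longrightarrow>
    lcomp f e = lcomp g e \<Longrightarrow> f = g"
  unfolding lens_epi_def by blast

lemma lens_FO_Cod_Put:
  assumes "is_lens L" "x \<in> Obj (Src L)" "b \<in> Arr (Tgt L)" "Dom (Tgt L) b = FO L x"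
  shows "FO L (Cod (Src L) (Put L x b)) = Cod (Tgt L) b"
  using assms lens_Cod_FA lens_FA_Put lens_Put by metis

definition transport_cat :: "('v \<Rightarrow> 'u) \<Rightarrow> 'v cat \<Rightarrow> 'u cat" where
  "transport_cat i K = \<lparr>Obj = i ` Obj K, Arr = i ` Arr K,
     Dom = (\<lambda>a. if a \<in> i ` Arr K then i (Dom K (inv i a)) else undefined),
     Cod = (\<lambda>a. if a \<in> i ` Arr K then i (Cod K (inv i a)) else undefined),
     Idn = (\<lambda>x. if x \<in> i ` Obj K then i (Idn K (inv i x)) else undefined),
     Comp = (\<lambda>g f. if f \<in> i ` Arr K \<and> g \<in> i ` Arr K \<and> Cod K (inv i f) = Dom K (inv i g)
                   then i (Comp K (inv i g) (inv i f)) else undefined)\<rparr>"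

lemma category_transport_cat:
  assumes i: "inj i" and K: "category_laws K"
  shows "category (transport_cat i K)"
proof (rule categoryI)
  interpret K: category_laws K by (fact K)
  show "category_laws (transport_cat i K)"
    by unfold_locales
      (use K.laws in \<open>auto simp: transport_cat_def inv_f_f[OF i] inj_image_mem_iff[OF i] inj_eq[OF i]\<close>)
qed (auto simp: transport_cat_def)

lemma transport_cat_simps:
  assumes "inj i"
  shows "Obj (transport_cat i K) = i ` Obj K" "Arr (transport_cat i K) = i ` Arr K"
    "a \<in> Arr K \<Longrightarrow> Dom (transport_cat i K) (i a) = i (Dom K a)"
    "a \<in> Arr K \<Longrightarrow> Cod (transport_cat i K) (i a) = i (Cod K a)"
    "x \<in> Obj K \<Longrightarrow> Idn (transport_cat i K) (i x) = i (Idn K x)"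
    "f \<in> Arr K \<Longrightarrow> g \<in> Arr K \<Longrightarrow>
      Comp (transport_cat i K) (i g) (i f) = (if Cod K f = Dom K g then i (Comp K g f) else undefined)"
  using assms by (simp_all add: transport_cat_def inv_f_f)

section \<open>Lenses surjective on objects and lenses injective on arrows\<close>

lemma surj_on_Obj_imp_lens_epi:
  assumes e: "is_lens e" and surj: "FO e ` Obj (Src e) = Obj (Tgt e)"
  shows "lens_epi e"
  unfolding lens_epi_def
proof (intro conjI allI impI)
  fix f g
  assume "is_lens f \<and> is_lens g \<and> Src f = Tgt e \<and> Src g = Tgt e \<and> Tgt f = Tgt g \<and> lcomp f e = lcomp g e"
  then have f: "is_lens f" and g: "is_lens g" and Src_f: "Src f = Tgt e" and Src_g: "Src g = Tgt e"
    and Tgt_fg: "Tgt f = Tgt g" and eq: "lcomp f e = lcomp g e" by auto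
  have FO_eq: "FO f y = FO g y" for y
  proof (cases "y \<in> Obj (Tgt e)")
    case True
    then obtain x where "x \<in> Obj (Src e)" "y = FO e x" using surj by auto
    then show ?thesis using arg_cong[OF eq, of "\<lambda>L. FO L x"] by simp
  qed (simp add: lens_FO_undefined f g Src_f Src_g)
  have FA_eq: "FA f u = FA g u" for u
  proof (cases "u \<in> Arr (Tgt e)")
    case True
    then obtain x where x: "x \<in> Obj (Src e)" "Dom (Tgt e) u = FO e x"
      using surj cat_Dom[OF lens_Tgt[OF e]] by (metis imageE)
    then have "Put e x u \<in> Arr (Src e)" "FA e (Put e x u) = u"
      using lens_Put[OF e] lens_FA_Put[OF e] True by auto
    then show ?thesis using arg_cong[OF eq, of "\<lambda>L. FA L (Put e x u)"] by simp
  qed (simp add: lens_FA_undefined f g Src_f Src_g)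
  have Put_eq: "Put f y c = Put g y c" for y c
  proof (cases "y \<in> Obj (Tgt e) \<and> c \<in> Arr (Tgt f) \<and> Dom (Tgt f) c = FO f y")
    case True
    then obtain x where x: "x \<in> Obj (Src e)" "y = FO e x" using surj by auto
    have "Put e x (Put f y c) = Put e x (Put g y c)"
      using arg_cong[OF eq, of "\<lambda>L. Put L x c"] True x Tgt_fg FO_eq by simp
    then have "FA e (Put e x (Put f y c)) = FA e (Put e x (Put g y c))" by simp
    then show ?thesis
      using lens_FA_Put[OF e x(1)] lens_Put[OF f] lens_Dom_Put[OF f] lens_Put[OF g] lens_Dom_Put[OF g]
        True x Src_f Src_g Tgt_fg FO_eq by simp
  next
    case False
    then show ?thesis using lens_Put_undefined[OF f] lens_Put_undefined[OF g] Src_f Src_g Tgt_fg FO_eq by metis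
  qed
  show "f = g" by (rule lens_eqI) (use Src_f Src_g Tgt_fg FO_eq FA_eq Put_eq in auto)
qed (fact e)

lemma inj_on_FA_imp_inj_on_FO:
  assumes m: "is_lens m" and inj: "inj_on (FA m) (Arr (Src m))"
  shows "inj_on (FO m) (Obj (Src m))"
proof (rule inj_onI)
  fix x y assume xy: "x \<in> Obj (Src m)" "y \<in> Obj (Src m)" "FO m x = FO m y"
  then have "FA m (Idn (Src m) x) = FA m (Idn (Src m) y)" by (simp add: lens_FA_Idn[OF m])
  then have "Idn (Src m) x = Idn (Src m) y"
    using inj cat_Idn[OF lens_Src[OF m]] xy by (auto dest: inj_onD)
  then show "x = y" using cat_Dom_Idn[OF lens_Src[OF m]] xy by metis
qed

lemma Put_FA_if_inj_on_FA:
  assumes m: "is_lens m" and inj: "inj_on (FA m) (Arr (Src m))"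
    and k: "k \<in> Arr (Src m)" and x: "Dom (Src m) k = x"
  shows "Put m x (FA m k) = k"
proof -
  have "x \<in> Obj (Src m)" "FA m k \<in> Arr (Tgt m)" "Dom (Tgt m) (FA m k) = FO m x"
    using cat_Dom[OF lens_Src[OF m] k] lens_FA[OF m k] lens_Dom_FA[OF m k] x by auto
  then have "Put m x (FA m k) \<in> Arr (Src m)" "FA m (Put m x (FA m k)) = FA m k"
    using lens_Put[OF m] lens_FA_Put[OF m] by auto
  then show ?thesis using inj_onD[OF inj] k by blast
qed

lemma inj_on_FA_imp_lens_mono:
  assumes m: "is_lens m" and inj: "inj_on (FA m) (Arr (Src m))"
  shows "lens_mono m"
  unfolding lens_mono_def
proof (intro conjI allI impI)
  fix f g
  assume "is_lens f \<and> is_lens g \<and> Src f = Src g \<and> Tgt f = Src m \<and> Tgt g = Src m \<and> lcomp m f = lcomp m g"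
  then have f: "is_lens f" and g: "is_lens g" and Src_fg: "Src f = Src g" and Tgt_f: "Tgt f = Src m"
    and Tgt_g: "Tgt g = Src m" and eq: "lcomp m f = lcomp m g" by auto
  have FO_eq: "FO f x = FO g x" for x
  proof (cases "x \<in> Obj (Src f)")
    case True
    then have "FO m (FO f x) = FO m (FO g x)" using arg_cong[OF eq, of "\<lambda>L. FO L x"] Src_fg by simp
    then show ?thesis
      using inj_onD[OF inj_on_FA_imp_inj_on_FO[OF m inj]] lens_FO[OF f True] lens_FO[OF g] True Src_fg Tgt_f Tgt_g
      by auto
  qed (simp add: lens_FO_undefined f g Src_fg)
  have FA_eq: "FA f u = FA g u" for u
  proof (cases "u \<in> Arr (Src f)")
    case True
    then have "FA m (FA f u) = FA m (FA g u)" using arg_cong[OF eq, of "\<lambda>L. FA L u"] Src_fg by simp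
    then show ?thesis using inj_onD[OF inj] lens_FA[OF f True] lens_FA[OF g] True Src_fg Tgt_f Tgt_g by auto
  qed (simp add: lens_FA_undefined f g Src_fg)
  have Put_eq: "Put f x c = Put g x c" for x c
  proof (cases "x \<in> Obj (Src f) \<and> c \<in> Arr (Src m) \<and> Dom (Src m) c = FO f x")
    case True
    have "FA m c \<in> Arr (Tgt m)" "Dom (Tgt m) (FA m c) = FO m (FO f x)"
      using lens_FA[OF m] lens_Dom_FA[OF m] True by auto
    then have "Put f x (Put m (FO f x) (FA m c)) = Put g x (Put m (FO g x) (FA m c))"
      using arg_cong[OF eq, of "\<lambda>L. Put L x (FA m c)"] True Src_fg FO_eq by simp
    then show ?thesis using Put_FA_if_inj_on_FA[OF m inj] True FO_eq by simp
  next
    case False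
    then show ?thesis using lens_Put_undefined[OF f] lens_Put_undefined[OF g] Src_fg Tgt_f Tgt_g FO_eq by metis
  qed
  show "f = g" by (rule lens_eqI) (use Src_fg Tgt_f Tgt_g FO_eq FA_eq Put_eq in auto)
qed (fact m)

section \<open>Images and full subcategories\<close>

definition id_lens :: "'u cat \<Rightarrow> 'u lens" where
  "id_lens C = \<lparr>Src = C, Tgt = C,
     FO = (\<lambda>x. if x \<in> Obj C then x else undefined),
     FA = (\<lambda>f. if f \<in> Arr C then f else undefined),
     Put = (\<lambda>x b. if x \<in> Obj C \<and> b \<in> Arr C \<and> Dom C b = x then b else undefined)\<rparr>"

lemma is_lens_id_lens: "category C \<Longrightarrow> is_lens (id_lens C)"
  by (rule lensI) (auto simp: id_lens_def cat_simps)

lemma lcomp_id_lens: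
  assumes e: "is_lens e"
  shows "lcomp (id_lens (Tgt e)) e = e"
proof (rule lens_eqI)
  show "FO (lcomp (id_lens (Tgt e)) e) x = FO e x" for x
    using lens_FO[OF e] lens_FO_undefined[OF e] by (auto simp: id_lens_def)
  show "FA (lcomp (id_lens (Tgt e)) e) f = FA e f" for f
    using lens_FA[OF e] lens_FA_undefined[OF e] by (auto simp: id_lens_def)
  show "Put (lcomp (id_lens (Tgt e)) e) x c = Put e x c" for x c
    using lens_FO[OF e] lens_Put_undefined[OF e, of x c] by (auto simp: id_lens_def)
qed (simp_all add: id_lens_def)

text \<open>Transport along the identity restricts the structure maps to the new carriers.\<close>

definition full_subcat :: "'u cat \<Rightarrow> 'u set \<Rightarrow> 'u cat" where
  "full_subcat B S =
     transport_cat id (B\<lparr>Obj := S, Arr := {u \<in> Arr B. Dom B u \<in> S \<and> Cod B u \<in> S}\<rparr>)"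

lemma full_subcat_simps:
  "Obj (full_subcat B S) = S"
  "Arr (full_subcat B S) = {u \<in> Arr B. Dom B u \<in> S \<and> Cod B u \<in> S}"
  "Dom (full_subcat B S) u = (if u \<in> Arr (full_subcat B S) then Dom B u else undefined)"
  "Cod (full_subcat B S) u = (if u \<in> Arr (full_subcat B S) then Cod B u else undefined)"
  "Idn (full_subcat B S) x = (if x \<in> S then Idn B x else undefined)"
  "Comp (full_subcat B S) v u =
     (if u \<in> Arr (full_subcat B S) \<and> v \<in> Arr (full_subcat B S) \<and> Cod B u = Dom B v
      then Comp B v u else undefined)"
  by (simp_all add: full_subcat_def transport_cat_def)

lemma category_full_subcat:
  assumes B: "category B" and S: "S \<subseteq> Obj B"
  shows "category (full_subcat B S)"
  unfolding full_subcat_def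
proof (rule category_transport_cat[OF inj_on_id])
  show "category_laws (B\<lparr>Obj := S, Arr := {u \<in> Arr B. Dom B u \<in> S \<and> Cod B u \<in> S}\<rparr>)"
    by unfold_locales (use S in \<open>auto simp: cat_simps[OF B] cat_Comp_assoc[OF B]\<close>)
qed

definition incl_lens :: "'u cat \<Rightarrow> 'u set \<Rightarrow> 'u lens" where
  "incl_lens B S = \<lparr>Src = full_subcat B S, Tgt = B,
     FO = (\<lambda>x. if x \<in> S then x else undefined),
     FA = (\<lambda>u. if u \<in> Arr (full_subcat B S) then u else undefined),
     Put = (\<lambda>x b. if x \<in> S \<and> b \<in> Arr B \<and> Dom B b = x then b else undefined)\<rparr>"

lemma is_lens_incl_lens:
  assumes B: "category B" and S: "S \<subseteq> Obj B"
    and closed: "\<And>u. u \<in> Arr B \<Longrightarrow> Dom B u \<in> S \<Longrightarrow> Cod B u \<in> S"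
  shows "is_lens (incl_lens B S)"
  by (rule lensI) (use B S closed category_full_subcat[OF B S] in \<open>auto simp: incl_lens_def full_subcat_simps cat_simps[OF B]\<close>)

lemma lens_mono_incl_lens:
  assumes "category B" "S \<subseteq> Obj B" "\<And>u. u \<in> Arr B \<Longrightarrow> Dom B u \<in> S \<Longrightarrow> Cod B u \<in> S"
  shows "lens_mono (incl_lens B S)"
  by (rule inj_on_FA_imp_lens_mono[OF is_lens_incl_lens[OF assms]]) (auto simp: incl_lens_def intro: inj_onI)

lemma lens_image_closed_Cod:
  assumes e: "is_lens e" and u: "u \<in> Arr (Tgt e)" and dom: "Dom (Tgt e) u \<in> FO e ` Obj (Src e)"
  shows "Cod (Tgt e) u \<in> FO e ` Obj (Src e)"
proof -
  obtain x where x: "x \<in> Obj (Src e)" "Dom (Tgt e) u = FO e x" using dom by auto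
  then have "Cod (Tgt e) u = FO e (Cod (Src e) (Put e x u))" using lens_FO_Cod_Put[OF e x(1) u] by simp
  then show ?thesis using cat_Cod[OF lens_Src[OF e] lens_Put[OF e x(1) u x(2)]] by blast
qed

definition corestrict :: "'u lens \<Rightarrow> 'u set \<Rightarrow> 'u lens" where
  "corestrict e S = e\<lparr>Tgt := full_subcat (Tgt e) S\<rparr>"

lemma is_lens_corestrict:
  assumes e: "is_lens e" and S: "S \<subseteq> Obj (Tgt e)" and image: "FO e ` Obj (Src e) \<subseteq> S"
  shows "is_lens (corestrict e S)"
proof -
  let ?f = "e\<lparr>Tgt := full_subcat (Tgt e) S\<rparr>"
  have "is_lens ?f"
  proof (rule lensI)
    show "category (Tgt ?f)" using category_full_subcat[OF lens_Tgt[OF e] S] by simp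
    show "Put ?f x (Comp (Tgt ?f) b' b) = Comp (Src ?f) (Put ?f (Cod (Src ?f) (Put ?f x b)) b') (Put ?f x b)"
      if "x \<in> Obj (Src ?f)" "b \<in> Arr (Tgt ?f)" "b' \<in> Arr (Tgt ?f)" "Dom (Tgt ?f) b = FO ?f x"
        "Dom (Tgt ?f) b' = FO ?f (Cod (Src ?f) (Put ?f x b))" for x b b'
    proof -
      have b: "x \<in> Obj (Src e)" "b \<in> Arr (Tgt e)" "b' \<in> Arr (Tgt e)" "Dom (Tgt e) b = FO e x"
        "Dom (Tgt e) b' = FO e (Cod (Src e) (Put e x b))" "Cod (Tgt e) b \<in> S"
        using that by (auto simp: full_subcat_simps split: if_splits)
      then have "Comp (Tgt ?f) b' b = Comp (Tgt e) b' b"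
        using that lens_FO_Cod_Put[OF e b(1,2,4)] by (simp add: full_subcat_simps)
      then show ?thesis using lens_Put_Comp[OF e b(1-5)] by simp
    qed
    show "Put ?f x b = undefined" if "\<not> (x \<in> Obj (Src ?f) \<and> b \<in> Arr (Tgt ?f) \<and> Dom (Tgt ?f) b = FO ?f x)"
      for x b
    proof (cases "x \<in> Obj (Src e) \<and> b \<in> Arr (Tgt e) \<and> Dom (Tgt e) b = FO e x")
      case True
      then have "Cod (Tgt e) b \<in> S"
        using lens_FO_Cod_Put[OF e] cat_Cod[OF lens_Src[OF e]] lens_Put[OF e] image by (metis image_subset_iff)
      then show ?thesis using that True image by (auto simp: full_subcat_simps)
    qed (simp add: lens_Put_undefined[OF e])
  qed (use e image[unfolded image_subset_iff] in \<open>auto simp: full_subcat_simps lens_FO lens_FA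
    lens_Dom_FA lens_Cod_FA lens_FA_Idn lens_FA_Comp lens_Put lens_Dom_Put lens_FA_Put lens_Put_Idn lens_FO_undefined lens_FA_undefined
    lens_Src cat_Dom[OF lens_Src[OF e]] cat_Cod[OF lens_Src[OF e]]\<close>)
  then show ?thesis by (simp add: corestrict_def)
qed

lemma lcomp_incl_lens_corestrict:
  assumes e: "is_lens e" and image: "FO e ` Obj (Src e) \<subseteq> S"
  shows "lcomp (incl_lens (Tgt e) S) (corestrict e S) = e"
proof (rule lens_eqI)
  show "FO (lcomp (incl_lens (Tgt e) S) (corestrict e S)) x = FO e x" for x
    using image lens_FO_undefined[OF e] by (auto simp: incl_lens_def corestrict_def)
  show "FA (lcomp (incl_lens (Tgt e) S) (corestrict e S)) f = FA e f" for f
    using image[unfolded image_subset_iff] lens_FA[OF e] lens_Dom_FA[OF e] lens_Cod_FA[OF e] lens_FA_undefined[OF e]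
      cat_Dom[OF lens_Src[OF e]] cat_Cod[OF lens_Src[OF e]]
    by (auto simp: incl_lens_def corestrict_def full_subcat_simps)
  show "Put (lcomp (incl_lens (Tgt e) S) (corestrict e S)) x c = Put e x c" for x c
    using image[unfolded image_subset_iff] lens_Put_undefined[OF e, of x c] by (auto simp: incl_lens_def corestrict_def)
qed (simp_all add: incl_lens_def corestrict_def)

lemma left_orthD:
  "left_orth e m \<Longrightarrow> is_lens f \<Longrightarrow> is_lens g \<Longrightarrow> Src f = Src e \<Longrightarrow> Tgt f = Src m \<Longrightarrow>
    Src g = Tgt e \<Longrightarrow> Tgt g = Tgt m \<Longrightarrow> lcomp g e = lcomp m f \<Longrightarrow>
    \<exists>!h. is_lens h \<and> Src h = Tgt e \<and> Tgt h = Src m \<and> lcomp h e = f \<and> lcomp m h = g"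
  unfolding left_orth_def by blast

lemma left_orth_monos_imp_surj_on_Obj:
  assumes e: "is_lens e" and orth: "\<forall>m. lens_mono m \<longrightarrow> left_orth e m"
  shows "FO e ` Obj (Src e) = Obj (Tgt e)"
proof -
  let ?B = "Tgt e" and ?S = "FO e ` Obj (Src e)"
  let ?m = "incl_lens ?B ?S" and ?f = "corestrict e ?S"
  have B: "category ?B" using lens_Tgt[OF e] .
  have S: "?S \<subseteq> Obj ?B" using lens_FO[OF e] by auto
  have orth_m: "left_orth e ?m" using orth lens_mono_incl_lens[OF B S lens_image_closed_Cod[OF e]] by blast
  have square: "lcomp (id_lens ?B) e = lcomp ?m ?f"
    using lcomp_id_lens[OF e] lcomp_incl_lens_corestrict[OF e order_refl] by simp
  have "\<exists>!h. is_lens h \<and> Src h = ?B \<and> Tgt h = Src ?m \<and> lcomp h e = ?f \<and> lcomp ?m h = id_lens ?B"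
    by (rule left_orthD[OF orth_m is_lens_corestrict[OF e S order_refl] is_lens_id_lens[OF B] _ _ _ _ square])
      (simp_all add: incl_lens_def id_lens_def corestrict_def)
  then obtain h where h: "is_lens h" "Src h = ?B" "Tgt h = full_subcat ?B ?S" "lcomp ?m h = id_lens ?B"
    by (auto simp: incl_lens_def)
  have "y \<in> ?S" if y: "y \<in> Obj ?B" for y
  proof -
    have "FO (lcomp ?m h) y = y" using h(4) y by (simp add: id_lens_def)
    moreover have "FO h y \<in> ?S" using lens_FO[OF h(1)] y h(2,3) by (simp add: full_subcat_simps)
    ultimately show ?thesis using y h(2) by (simp add: incl_lens_def)
  qed
  then show ?thesis using S by blast
qed

section \<open>Diagonal fillers\<close>

locale lens_lifting_problem =
  fixes e m f g :: "'u lens"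
  assumes e: "is_lens e" and m: "is_lens m" and f: "is_lens f" and g: "is_lens g"
    and Src_f: "Src f = Src e" and Tgt_f: "Tgt f = Src m"
    and Src_g: "Src g = Tgt e" and Tgt_g: "Tgt g = Tgt m"
    and square: "lcomp g e = lcomp m f"
    and surj: "FO e ` Obj (Src e) = Obj (Tgt e)"
    and inj: "inj_on (FA m) (Arr (Src m))"
begin

abbreviation "A \<equiv> Src e"
abbreviation "B \<equiv> Tgt e"
abbreviation "C \<equiv> Src m"
abbreviation "D \<equiv> Tgt m"

lemma square_FO: "x \<in> Obj A \<Longrightarrow> FO g (FO e x) = FO m (FO f x)"
  using arg_cong[OF square, of "\<lambda>L. FO L x"] Src_f by simp

lemma square_FA: "u \<in> Arr A \<Longrightarrow> FA g (FA e u) = FA m (FA f u)"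
  using arg_cong[OF square, of "\<lambda>L. FA L u"] Src_f by simp

lemma square_Put:
  assumes "x \<in> Obj A" "d \<in> Arr D" "Dom D d = FO g (FO e x)"
  shows "Put e x (Put g (FO e x) d) = Put f x (Put m (FO f x) d)"
  using arg_cong[OF square, of "\<lambda>L. Put L x d"] assms Src_f Tgt_g square_FO[OF assms(1)] by simp

lemma FO_m_eqD: "c \<in> Obj C \<Longrightarrow> c' \<in> Obj C \<Longrightarrow> FO m c = FO m c' \<Longrightarrow> c = c'"
  using inj_on_FA_imp_inj_on_FO[OF m inj] by (auto dest: inj_onD)

lemma FA_m_eqD: "c \<in> Arr C \<Longrightarrow> c' \<in> Arr C \<Longrightarrow> FA m c = FA m c' \<Longrightarrow> c = c'"
  using inj by (auto dest: inj_onD)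

definition diag_obj :: "'u \<Rightarrow> 'u" where
  "diag_obj y = FO f (SOME x. x \<in> Obj A \<and> FO e x = y)"

lemma diag_obj:
  assumes y: "y \<in> Obj B"
  shows "diag_obj y \<in> Obj C" and "FO m (diag_obj y) = FO g y"
proof -
  let ?x = "SOME x. x \<in> Obj A \<and> FO e x = y"
  obtain x where "x \<in> Obj A" "FO e x = y" using y surj by (metis imageE)
  then have x: "?x \<in> Obj A" "FO e ?x = y" using someI[of "\<lambda>x. x \<in> Obj A \<and> FO e x = y"] by blast+
  show "diag_obj y \<in> Obj C" using lens_FO[OF f] x Src_f Tgt_f by (simp add: diag_obj_def)
  show "FO m (diag_obj y) = FO g y" using square_FO[OF x(1)] x(2) by (simp add: diag_obj_def)
qed

lemma diag_obj_FO_e: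
  assumes x: "x \<in> Obj A"
  shows "diag_obj (FO e x) = FO f x"
proof -
  have ex: "FO e x \<in> Obj B" using lens_FO[OF e x] .
  have "FO f x \<in> Obj C" using lens_FO[OF f] x Src_f Tgt_f by simp
  then show ?thesis using FO_m_eqD[OF diag_obj(1)[OF ex]] diag_obj(2)[OF ex] square_FO[OF x] by simp
qed

text \<open>As m is injective on arrows, its put is inverse to its get; so the diagonal is forced to send
  an arrow u to the lift along m of g u.\<close>

definition diag :: "'u lens" where
  "diag = \<lparr>Src = B, Tgt = C,
     FO = (\<lambda>y. if y \<in> Obj B then diag_obj y else undefined),
     FA = (\<lambda>u. if u \<in> Arr B then Put m (diag_obj (Dom B u)) (FA g u) else undefined),
     Put = (\<lambda>y c. if y \<in> Obj B \<and> c \<in> Arr C \<and> Dom C c = diag_obj y then Put g y (FA m c) else undefined)\<rparr>"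

lemma diag_Src_Tgt: "Src diag = B" "Tgt diag = C"
  by (simp_all add: diag_def)

lemma diag_FO: "y \<in> Obj B \<Longrightarrow> FO diag y = diag_obj y"
  by (simp add: diag_def)

lemma diag_FA:
  assumes u: "u \<in> Arr B"
  shows "FA diag u \<in> Arr C" "Dom C (FA diag u) = diag_obj (Dom B u)"
    "FA m (FA diag u) = FA g u" "Cod C (FA diag u) = diag_obj (Cod B u)"
proof -
  have dom: "Dom B u \<in> Obj B" and cod: "Cod B u \<in> Obj B"
    using cat_Dom[OF lens_Tgt[OF e] u] cat_Cod[OF lens_Tgt[OF e] u] .
  have gu: "FA g u \<in> Arr D" "Dom D (FA g u) = FO m (diag_obj (Dom B u))"
    "Cod D (FA g u) = FO m (diag_obj (Cod B u))"
    using lens_FA[OF g] lens_Dom_FA[OF g] lens_Cod_FA[OF g] diag_obj dom cod u Src_g Tgt_g by auto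
  show arr: "FA diag u \<in> Arr C" and "Dom C (FA diag u) = diag_obj (Dom B u)"
    and FA: "FA m (FA diag u) = FA g u"
    using lens_Put[OF m] lens_Dom_Put[OF m] lens_FA_Put[OF m] gu diag_obj(1)[OF dom] u
    by (auto simp: diag_def)
  have "FO m (Cod C (FA diag u)) = FO m (diag_obj (Cod B u))"
    using lens_Cod_FA[OF m arr] FA gu by simp
  then show "Cod C (FA diag u) = diag_obj (Cod B u)"
    using FO_m_eqD cat_Cod[OF lens_Src[OF m] arr] diag_obj(1)[OF cod] by blast
qed

lemma diag_Put:
  assumes "y \<in> Obj B" "c \<in> Arr C" "Dom C c = diag_obj y"
  shows "Put diag y c \<in> Arr B" "Dom B (Put diag y c) = y" "FA g (Put diag y c) = FA m c"
proof -
  have "FA m c \<in> Arr D" "Dom D (FA m c) = FO g y"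
    using lens_FA[OF m] lens_Dom_FA[OF m] assms diag_obj by auto
  then show "Put diag y c \<in> Arr B" "Dom B (Put diag y c) = y" "FA g (Put diag y c) = FA m c"
    using lens_Put[OF g] lens_Dom_Put[OF g] lens_FA_Put[OF g] assms Src_g Tgt_g by (auto simp: diag_def)
qed

lemma diag_FA_Comp:
  assumes uv: "u \<in> Arr B" "v \<in> Arr B" "Cod B u = Dom B v"
  shows "FA diag (Comp B v u) = Comp C (FA diag v) (FA diag u)"
proof (rule FA_m_eqD)
  have composable: "Cod C (FA diag u) = Dom C (FA diag v)" using diag_FA uv by simp
  show "FA diag (Comp B v u) \<in> Arr C" using diag_FA(1) cat_Comp[OF lens_Tgt[OF e] uv] .
  show "Comp C (FA diag v) (FA diag u) \<in> Arr C"
    using cat_Comp[OF lens_Src[OF m] diag_FA(1)[OF uv(1)] diag_FA(1)[OF uv(2)] composable] .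
  have "FA m (FA diag (Comp B v u)) = FA g (Comp B v u)" using diag_FA(3) cat_Comp[OF lens_Tgt[OF e] uv] .
  also have "\<dots> = Comp D (FA g v) (FA g u)" using lens_FA_Comp[OF g] uv Src_g Tgt_g by simp
  also have "\<dots> = FA m (Comp C (FA diag v) (FA diag u))"
    using lens_FA_Comp[OF m diag_FA(1)[OF uv(1)] diag_FA(1)[OF uv(2)] composable] diag_FA(3) uv by simp
  finally show "FA m (FA diag (Comp B v u)) = FA m (Comp C (FA diag v) (FA diag u))" .
qed

lemma diag_Put_Comp:
  assumes y: "y \<in> Obj B" and c: "c \<in> Arr C" "Dom C c = diag_obj y"
    and c': "c' \<in> Arr C" "Dom C c' = diag_obj (Cod B (Put diag y c))"
  shows "Put diag y (Comp C c' c) = Comp B (Put diag (Cod B (Put diag y c)) c') (Put diag y c)"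
proof -
  let ?y' = "Cod B (Put diag y c)"
  have y': "?y' \<in> Obj B" using cat_Cod[OF lens_Tgt[OF e] diag_Put(1)[OF y c]] .
  have Put_g: "Put diag y c = Put g y (FA m c)" using y c by (simp add: diag_def)
  have FA_c: "FA m c \<in> Arr D" "Dom D (FA m c) = FO g y"
    using lens_FA[OF m c(1)] lens_Dom_FA[OF m c(1)] c diag_obj(2)[OF y] by auto
  have FA_c': "FA m c' \<in> Arr D" "Dom D (FA m c') = FO g ?y'"
    using lens_FA[OF m c'(1)] lens_Dom_FA[OF m c'(1)] c' diag_obj(2)[OF y'] by auto
  have "FO m (Cod C c) = FO m (Dom C c')"
    using lens_Cod_FA[OF m c(1)] lens_FO_Cod_Put[OF g, of y "FA m c"] FA_c FA_c' lens_Dom_FA[OF m c'(1)]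
      y Put_g Src_g Tgt_g by simp
  then have composable: "Cod C c = Dom C c'"
    using FO_m_eqD cat_Cod[OF lens_Src[OF m] c(1)] cat_Dom[OF lens_Src[OF m] c'(1)] by blast
  have "Put diag y (Comp C c' c) = Put g y (FA m (Comp C c' c))"
    using y c cat_Comp[OF lens_Src[OF m] c(1) c'(1) composable] cat_Dom_Comp[OF lens_Src[OF m] c(1) c'(1) composable]
    by (simp add: diag_def)
  also have "\<dots> = Put g y (Comp D (FA m c') (FA m c))" using lens_FA_Comp[OF m c(1) c'(1) composable] by simp
  also have "\<dots> = Comp B (Put g ?y' (FA m c')) (Put g y (FA m c))"
    using lens_Put_Comp[OF g, of y "FA m c" "FA m c'"] y FA_c FA_c' Put_g Src_g Tgt_g by simp
  also have "\<dots> = Comp B (Put diag ?y' c') (Put diag y c)" using y' c' Put_g by (simp add: diag_def)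
  finally show ?thesis .
qed

lemma is_lens_diag: "is_lens diag"
proof (rule lensI)
  fix y assume "y \<in> Obj (Src diag)"
  then have y: "y \<in> Obj B" by (simp add: diag_def)
  have Idn: "Idn C (diag_obj y) \<in> Arr C" using cat_Idn[OF lens_Src[OF m] diag_obj(1)[OF y]] .
  have FA_Idn: "FA m (Idn C (diag_obj y)) = Idn D (FO g y)"
    using lens_FA_Idn[OF m diag_obj(1)[OF y]] diag_obj(2)[OF y] by simp
  show "FO diag y \<in> Obj (Tgt diag)" using diag_obj(1)[OF y] y by (simp add: diag_def)
  have "FA m (FA diag (Idn B y)) = FA m (Idn C (diag_obj y))"
    using diag_FA(3) cat_Idn[OF lens_Tgt[OF e] y] lens_FA_Idn[OF g] y FA_Idn Src_g Tgt_g by simp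
  then show "FA diag (Idn (Src diag) y) = Idn (Tgt diag) (FO diag y)"
    using FA_m_eqD diag_FA(1) cat_Idn[OF lens_Tgt[OF e] y] Idn y by (simp add: diag_def)
  show "Put diag y (Idn (Tgt diag) (FO diag y)) = Idn (Src diag) y"
    using y Idn FA_Idn cat_Dom_Idn[OF lens_Src[OF m] diag_obj(1)[OF y]] lens_Put_Idn[OF g] Src_g Tgt_g
    by (simp add: diag_def)
next
  fix y c assume "y \<in> Obj (Src diag)" "c \<in> Arr (Tgt diag)" "Dom (Tgt diag) c = FO diag y"
  then have yc: "y \<in> Obj B" "c \<in> Arr C" "Dom C c = diag_obj y" by (simp_all add: diag_def)
  show "Put diag y c \<in> Arr (Src diag)" "Dom (Src diag) (Put diag y c) = y"
    using diag_Put[OF yc] by (simp_all add: diag_def)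
  have "FA m (FA diag (Put diag y c)) = FA m c" using diag_FA(3) diag_Put[OF yc] by simp
  then show "FA diag (Put diag y c) = c" using FA_m_eqD diag_FA(1) diag_Put(1)[OF yc] yc(2) by blast
next
  fix u assume "u \<in> Arr (Src diag)"
  then have u: "u \<in> Arr B" by (simp add: diag_def)
  then show "FA diag u \<in> Arr (Tgt diag)" "Dom (Tgt diag) (FA diag u) = FO diag (Dom (Src diag) u)"
    "Cod (Tgt diag) (FA diag u) = FO diag (Cod (Src diag) u)"
    using diag_FA[OF u] cat_Dom[OF lens_Tgt[OF e] u] cat_Cod[OF lens_Tgt[OF e] u]
    by (simp_all add: diag_def)
next
  fix u v assume "u \<in> Arr (Src diag)" "v \<in> Arr (Src diag)" "Cod (Src diag) u = Dom (Src diag) v"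
  then show "FA diag (Comp (Src diag) v u) = Comp (Tgt diag) (FA diag v) (FA diag u)"
    using diag_FA_Comp by (simp add: diag_Src_Tgt)
next
  fix y c c' assume "y \<in> Obj (Src diag)" "c \<in> Arr (Tgt diag)" "c' \<in> Arr (Tgt diag)"
    "Dom (Tgt diag) c = FO diag y" "Dom (Tgt diag) c' = FO diag (Cod (Src diag) (Put diag y c))"
  then show "Put diag y (Comp (Tgt diag) c' c) =
      Comp (Src diag) (Put diag (Cod (Src diag) (Put diag y c)) c') (Put diag y c)"
    using diag_Put_Comp diag_Put(1) cat_Cod[OF lens_Tgt[OF e]] by (simp add: diag_Src_Tgt diag_FO)
qed (auto simp: diag_def lens_Tgt[OF e] lens_Src[OF m])

lemma lcomp_diag_e: "lcomp diag e = f"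
proof (rule lens_eqI)
  show "FO (lcomp diag e) x = FO f x" for x
    using diag_obj_FO_e lens_FO[OF e] lens_FO_undefined[OF f] Src_f by (simp add: diag_def)
  show "FA (lcomp diag e) u = FA f u" for u
  proof (cases "u \<in> Arr A")
    case True
    have "Put m (FO f (Dom A u)) (FA m (FA f u)) = FA f u"
      using Put_FA_if_inj_on_FA[OF m inj] lens_FA[OF f] lens_Dom_FA[OF f] True Src_f Tgt_f by simp
    then show ?thesis
      using True lens_FA[OF e True] lens_Dom_FA[OF e True] diag_obj_FO_e cat_Dom[OF lens_Src[OF e] True]
        square_FA[OF True]
      by (simp add: diag_def)
  qed (simp add: lens_FA_undefined[OF f] Src_f)
  show "Put (lcomp diag e) x c = Put f x c" for x c
  proof (cases "x \<in> Obj A \<and> c \<in> Arr C \<and> Dom C c = FO f x")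
    case True
    have "FA m c \<in> Arr D" "Dom D (FA m c) = FO g (FO e x)"
      using lens_FA[OF m] lens_Dom_FA[OF m] True square_FO by auto
    then have "Put e x (Put g (FO e x) (FA m c)) = Put f x c"
      using square_Put True Put_FA_if_inj_on_FA[OF m inj] by simp
    then show ?thesis using True lens_FO[OF e] diag_obj_FO_e by (simp add: diag_def)
  next
    case False
    then show ?thesis
      using lens_Put_undefined[OF f, of x c] diag_obj_FO_e lens_FO[OF e] Src_f Tgt_f by (auto simp: diag_def)
  qed
qed (simp_all add: diag_def Src_f Tgt_f)

lemma lcomp_m_diag: "lcomp m diag = g"
proof (rule lens_eqI)
  show "FO (lcomp m diag) y = FO g y" for y
    using diag_obj lens_FO_undefined[OF g] Src_g by (simp add: diag_def)
  show "FA (lcomp m diag) u = FA g u" for u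
    using diag_FA lens_FA_undefined[OF g] Src_g by (simp add: diag_def)
  show "Put (lcomp m diag) y d = Put g y d" for y d
  proof (cases "y \<in> Obj B \<and> d \<in> Arr D \<and> Dom D d = FO g y")
    case True
    then have "Put m (diag_obj y) d \<in> Arr C" "Dom C (Put m (diag_obj y) d) = diag_obj y"
      "FA m (Put m (diag_obj y) d) = d"
      using lens_Put[OF m] lens_Dom_Put[OF m] lens_FA_Put[OF m] diag_obj by auto
    then show ?thesis using True diag_obj by (simp add: diag_def)
  next
    case False
    then show ?thesis using lens_Put_undefined[OF g, of y d] diag_obj Src_g Tgt_g by (auto simp: diag_def)
  qed
qed (simp_all add: diag_def Src_g Tgt_g)

lemma diagonal_exists: "\<exists>h. is_lens h \<and> Src h = Tgt e \<and> Tgt h = Src m \<and> lcomp h e = f \<and> lcomp m h = g"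
  using is_lens_diag diag_Src_Tgt lcomp_diag_e lcomp_m_diag by blast

end

lemma lens_epi_left_orthI:
  assumes epi: "lens_epi e" and m: "is_lens m"
    and diagonal: "\<And>f g. is_lens f \<Longrightarrow> is_lens g \<Longrightarrow> Src f = Src e \<Longrightarrow> Tgt f = Src m \<Longrightarrow>
      Src g = Tgt e \<Longrightarrow> Tgt g = Tgt m \<Longrightarrow> lcomp g e = lcomp m f \<Longrightarrow>
      \<exists>h. is_lens h \<and> Src h = Tgt e \<and> Tgt h = Src m \<and> lcomp h e = f \<and> lcomp m h = g"
  shows "left_orth e m"
  unfolding left_orth_def
proof (intro conjI allI impI)
  show "is_lens e" using epi by (simp add: lens_epi_def)
  fix f g
  assume "is_lens f \<and> is_lens g \<and> Src f = Src e \<and> Tgt f = Src m \<and> Src g = Tgt e \<and> Tgt g = Tgt m \<and>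
    lcomp g e = lcomp m f"
  then obtain h where h: "is_lens h \<and> Src h = Tgt e \<and> Tgt h = Src m \<and> lcomp h e = f \<and> lcomp m h = g"
    using diagonal by blast
  show "\<exists>!h. is_lens h \<and> Src h = Tgt e \<and> Tgt h = Src m \<and> lcomp h e = f \<and> lcomp m h = g"
    using h lens_epiD[OF epi] by (intro ex1I[of _ h]) auto
qed (fact m)

lemma surj_on_Obj_inj_on_FA_imp_left_orth:
  assumes e: "is_lens e" and surj: "FO e ` Obj (Src e) = Obj (Tgt e)"
    and m: "is_lens m" and inj: "inj_on (FA m) (Arr (Src m))"
  shows "left_orth e m"
  by (rule lens_epi_left_orthI[OF surj_on_Obj_imp_lens_epi[OF e surj] m])
    (simp add: lens_lifting_problem.diagonal_exists lens_lifting_problem_def e surj m inj)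

section \<open>Embedding products into an infinite universe\<close>

unbundle cardinal_syntax

lemma inj_times_into_infinite:
  assumes "infinite (UNIV :: 'u set)" and "|UNIV :: 'v set| \<le>o |UNIV :: 'u set|"
  obtains i :: "'u \<times> 'v \<Rightarrow> 'u" where "inj i"
proof -
  have "|UNIV \<times> UNIV :: ('u \<times> 'v) set| =o |UNIV :: 'u set|"
    using card_of_Times_infinite[OF assms(1) _ assms(2)] by blast
  then show ?thesis using that by (metis card_of_ordIso bij_betw_def UNIV_Times_UNIV)
qed

lemma card_of_finite_UNIV_ordLeq_infinite:
  "infinite (UNIV :: 'u set) \<Longrightarrow> |UNIV :: 'v :: finite set| \<le>o |UNIV :: 'u set|"
  by (meson card_of_Well_order card_of_ordLeq_infinite finite_UNIV ordLeq_total)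

section \<open>Kernel pairs\<close>

definition kernel_pair :: "'u lens \<Rightarrow> ('u \<times> 'u) cat" where
  "kernel_pair m = \<lparr>Obj = {(x, y). x \<in> Obj (Src m) \<and> y \<in> Obj (Src m) \<and> FO m x = FO m y},
     Arr = {(u, v). u \<in> Arr (Src m) \<and> v \<in> Arr (Src m) \<and> FA m u = FA m v},
     Dom = (\<lambda>(u, v). (Dom (Src m) u, Dom (Src m) v)),
     Cod = (\<lambda>(u, v). (Cod (Src m) u, Cod (Src m) v)),
     Idn = (\<lambda>(x, y). (Idn (Src m) x, Idn (Src m) y)),
     Comp = (\<lambda>(u', v') (u, v). (Comp (Src m) u' u, Comp (Src m) v' v))\<rparr>"

lemma kernel_pair_simps:
  "p \<in> Obj (kernel_pair m) \<longleftrightarrow> fst p \<in> Obj (Src m) \<and> snd p \<in> Obj (Src m) \<and> FO m (fst p) = FO m (snd p)"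
  "q \<in> Arr (kernel_pair m) \<longleftrightarrow> fst q \<in> Arr (Src m) \<and> snd q \<in> Arr (Src m) \<and> FA m (fst q) = FA m (snd q)"
  "Dom (kernel_pair m) (u, v) = (Dom (Src m) u, Dom (Src m) v)"
  "Cod (kernel_pair m) (u, v) = (Cod (Src m) u, Cod (Src m) v)"
  "Idn (kernel_pair m) (x, y) = (Idn (Src m) x, Idn (Src m) y)"
  "Comp (kernel_pair m) (u', v') (u, v) = (Comp (Src m) u' u, Comp (Src m) v' v)"
  by (auto simp: kernel_pair_def)

lemma category_laws_kernel_pair:
  assumes m: "is_lens m"
  shows "category_laws (kernel_pair m)"
proof -
  have C: "category (Src m)" using lens_Src[OF m] .
  show ?thesis
    by unfold_locales (auto simp: kernel_pair_def cat_simps[OF C] cat_Comp_assoc[OF C] lens_FA_Idn[OF m]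
      lens_FA_Comp[OF m] simp flip: lens_Dom_FA[OF m] lens_Cod_FA[OF m])
qed

definition kernel_proj :: "('u \<times> 'u \<Rightarrow> 'u) \<Rightarrow> 'u lens \<Rightarrow> 'u lens" where
  "kernel_proj i m = \<lparr>Src = transport_cat i (kernel_pair m), Tgt = Src m,
     FO = (\<lambda>a. if a \<in> i ` Obj (kernel_pair m) then fst (inv i a) else undefined),
     FA = (\<lambda>a. if a \<in> i ` Arr (kernel_pair m) then fst (inv i a) else undefined),
     Put = (\<lambda>a u. if a \<in> i ` Obj (kernel_pair m) \<and> u \<in> Arr (Src m) \<and> Dom (Src m) u = fst (inv i a)
                   then i (u, Put m (snd (inv i a)) (FA m u)) else undefined)\<rparr>"

lemma kernel_proj_simps:
  assumes i: "inj i"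
  shows "Src (kernel_proj i m) = transport_cat i (kernel_pair m)" "Tgt (kernel_proj i m) = Src m"
    "p \<in> Obj (kernel_pair m) \<Longrightarrow> FO (kernel_proj i m) (i p) = fst p"
    "p \<in> Arr (kernel_pair m) \<Longrightarrow> FA (kernel_proj i m) (i p) = fst p"
    "(x, y) \<in> Obj (kernel_pair m) \<Longrightarrow> u \<in> Arr (Src m) \<Longrightarrow> Dom (Src m) u = x \<Longrightarrow>
      Put (kernel_proj i m) (i (x, y)) u = i (u, Put m y (FA m u))"
  by (simp_all add: kernel_proj_def inv_f_f[OF i])

lemma kernel_pair_Put:
  assumes m: "is_lens m" and xy: "(x, y) \<in> Obj (kernel_pair m)" and u: "u \<in> Arr (Src m)" "Dom (Src m) u = x"
  shows "(u, Put m y (FA m u)) \<in> Arr (kernel_pair m)" "Dom (Src m) (Put m y (FA m u)) = y"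
proof -
  have "y \<in> Obj (Src m)" "FA m u \<in> Arr (Tgt m)" "Dom (Tgt m) (FA m u) = FO m y"
    using xy lens_FA[OF m u(1)] lens_Dom_FA[OF m u(1)] u(2) by (auto simp: kernel_pair_simps)
  then show "(u, Put m y (FA m u)) \<in> Arr (kernel_pair m)" "Dom (Src m) (Put m y (FA m u)) = y"
    using lens_Put[OF m] lens_Dom_Put[OF m] lens_FA_Put[OF m] u(1) by (auto simp: kernel_pair_simps)
qed

lemma kernel_proj_Put_Comp:
  assumes m: "is_lens m" and i: "inj i" and xy: "(x, y) \<in> Obj (kernel_pair m)"
    and u: "u \<in> Arr (Src m)" "Dom (Src m) u = x"
  defines "P \<equiv> Put (kernel_proj i m)" and "K \<equiv> transport_cat i (kernel_pair m)"
  assumes u': "u' \<in> Arr (Src m)" "Dom (Src m) u' = FO (kernel_proj i m) (Cod K (P (i (x, y)) u))"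
  shows "P (i (x, y)) (Comp (Src m) u' u) = Comp K (P (Cod K (P (i (x, y)) u)) u') (P (i (x, y)) u)"
proof -
  let ?v = "Put m y (FA m u)"
  let ?y' = "Cod (Src m) ?v"
  let ?v' = "Put m ?y' (FA m u')"
  have C: "category (Src m)" using lens_Src[OF m] .
  have v: "(u, ?v) \<in> Arr (kernel_pair m)" "Dom (Src m) ?v = y" using kernel_pair_Put[OF m xy u] by auto
  have y': "(Cod (Src m) u, ?y') \<in> Obj (kernel_pair m)"
    using category_laws.Cod_closed[OF category_laws_kernel_pair[OF m] v(1)] by (simp add: kernel_pair_simps)
  have composable: "Cod (Src m) u = Dom (Src m) u'"
    using u'(2) v(1) y' u xy
    by (simp add: P_def K_def kernel_proj_simps[OF i] transport_cat_simps[OF i] kernel_pair_simps(4))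
  have v': "(u', ?v') \<in> Arr (kernel_pair m)" "Dom (Src m) ?v' = ?y'"
    using kernel_pair_Put[OF m y' u'(1) composable[symmetric]] by auto
  have y: "y \<in> Obj (Src m)" and Fu: "FA m u \<in> Arr (Tgt m)" "Dom (Tgt m) (FA m u) = FO m y"
    using xy lens_FA[OF m u(1)] lens_Dom_FA[OF m u(1)] u(2) by (auto simp: kernel_pair_simps)
  have v_arr: "?v \<in> Arr (Src m)" and v_FA: "FA m ?v = FA m u" using v(1) by (simp_all add: kernel_pair_simps)
  have "FO m ?y' = FO m (Cod (Src m) u)" using lens_Cod_FA[OF m v_arr] lens_Cod_FA[OF m u(1)] v_FA by simp
  then have Fu': "FA m u' \<in> Arr (Tgt m)" "Dom (Tgt m) (FA m u') = FO m ?y'"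
    using lens_FA[OF m u'(1)] lens_Dom_FA[OF m u'(1)] composable by simp_all
  have "Put m y (FA m (Comp (Src m) u' u)) = Comp (Src m) ?v' ?v"
    using lens_FA_Comp[OF m u(1) u'(1) composable] lens_Put_Comp[OF m y Fu(1) Fu'(1) Fu(2) Fu'(2)] by simp
  then have "P (i (x, y)) (Comp (Src m) u' u) = i (Comp (Src m) u' u, Comp (Src m) ?v' ?v)"
    using kernel_proj_simps(5)[OF i xy cat_Comp[OF C u(1) u'(1) composable]] cat_Dom_Comp[OF C u(1) u'(1) composable] u(2)
    by (simp add: P_def)
  also have "\<dots> = Comp K (P (Cod K (P (i (x, y)) u)) u') (P (i (x, y)) u)"
    using v v' y' u u'(1) composable xy
    by (simp add: P_def K_def kernel_proj_simps[OF i] transport_cat_simps[OF i] kernel_pair_simps)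
  finally show ?thesis .
qed

lemma is_lens_kernel_proj:
  assumes m: "is_lens m" and i: "inj i"
  shows "is_lens (kernel_proj i m)" (is "is_lens ?p")
proof -
  have C: "category (Src m)" using lens_Src[OF m] .
  note simps = kernel_proj_simps[OF i] transport_cat_simps[OF i] kernel_pair_simps inj_image_mem_iff[OF i]
  show ?thesis
  proof (rule lensI)
    show "category (Src ?p)" "category (Tgt ?p)"
      using category_transport_cat[OF i category_laws_kernel_pair[OF m]] C by (simp_all add: simps)
  next
    fix a assume "a \<in> Obj (Src ?p)"
    then obtain x y where a: "a = i (x, y)" "(x, y) \<in> Obj (kernel_pair m)" by (auto simp: simps)
    then have xy: "x \<in> Obj (Src m)" "y \<in> Obj (Src m)" "FO m x = FO m y" by (simp_all add: simps)
    show "FO ?p a \<in> Obj (Tgt ?p)" using a xy by (simp add: simps)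
    show "FA ?p (Idn (Src ?p) a) = Idn (Tgt ?p) (FO ?p a)"
      using a xy cat_Idn[OF C] lens_FA_Idn[OF m] by (simp add: simps)
    show "Put ?p a (Idn (Tgt ?p) (FO ?p a)) = Idn (Src ?p) a"
      using a xy cat_Idn[OF C] cat_Dom_Idn[OF C] lens_FA_Idn[OF m] lens_Put_Idn[OF m] by (simp add: simps)
  next
    fix a assume "a \<in> Arr (Src ?p)"
    then obtain u v where a: "a = i (u, v)" "(u, v) \<in> Arr (kernel_pair m)" by (auto simp: simps)
    then have uv: "u \<in> Arr (Src m)" "v \<in> Arr (Src m)" "FA m u = FA m v" by (simp_all add: simps)
    have "FO m (Dom (Src m) u) = FO m (Dom (Src m) v)" "FO m (Cod (Src m) u) = FO m (Cod (Src m) v)"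
      using uv lens_Dom_FA[OF m] lens_Cod_FA[OF m] by metis+
    then show "FA ?p a \<in> Arr (Tgt ?p)" "Dom (Tgt ?p) (FA ?p a) = FO ?p (Dom (Src ?p) a)"
      "Cod (Tgt ?p) (FA ?p a) = FO ?p (Cod (Src ?p) a)"
      using a uv cat_Dom[OF C] cat_Cod[OF C] by (simp_all add: simps)
  next
    fix a b assume "a \<in> Arr (Src ?p)" "b \<in> Arr (Src ?p)" "Cod (Src ?p) a = Dom (Src ?p) b"
    then obtain u v u' v' where "a = i (u, v)" "(u, v) \<in> Arr (kernel_pair m)"
      "b = i (u', v')" "(u', v') \<in> Arr (kernel_pair m)"
      "Cod (Src m) u = Dom (Src m) u'" "Cod (Src m) v = Dom (Src m) v'"
      by (auto simp: simps inj_eq[OF i])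
    then show "FA ?p (Comp (Src ?p) b a) = Comp (Tgt ?p) (FA ?p b) (FA ?p a)"
      using cat_Comp[OF C] lens_FA_Comp[OF m] by (simp add: simps)
  next
    fix a u assume "a \<in> Obj (Src ?p)" "u \<in> Arr (Tgt ?p)" "Dom (Tgt ?p) u = FO ?p a"
    then obtain x y where a: "a = i (x, y)" "(x, y) \<in> Obj (kernel_pair m)"
      and u: "u \<in> Arr (Src m)" "Dom (Src m) u = x" by (auto simp: simps)
    then show "Put ?p a u \<in> Arr (Src ?p)" "Dom (Src ?p) (Put ?p a u) = a" "FA ?p (Put ?p a u) = u"
      using kernel_pair_Put[OF m a(2) u] by (simp_all add: simps)
  next
    fix a u u' assume H: "a \<in> Obj (Src ?p)" "u \<in> Arr (Tgt ?p)" "u' \<in> Arr (Tgt ?p)"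
      "Dom (Tgt ?p) u = FO ?p a" "Dom (Tgt ?p) u' = FO ?p (Cod (Src ?p) (Put ?p a u))"
    from H(1,2,4) obtain x y where a: "a = i (x, y)" "(x, y) \<in> Obj (kernel_pair m)"
      and u: "u \<in> Arr (Src m)" "Dom (Src m) u = x" by (auto simp: simps)
    then show "Put ?p a (Comp (Tgt ?p) u' u) = Comp (Src ?p) (Put ?p (Cod (Src ?p) (Put ?p a u)) u') (Put ?p a u)"
      using kernel_proj_Put_Comp[OF m i a(2) u] H(3,5) by (simp add: kernel_proj_simps(1,2)[OF i])
  qed (auto simp: kernel_proj_def transport_cat_def)
qed

text \<open>The kernel pair is symmetric, so transporting it along i and along i \<circ> prod.swap gives the same
  category; thus kernel_proj (i \<circ> prod.swap) m is the second projection of the kernel pair.\<close>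

lemma transport_cat_kernel_pair_swap:
  fixes i :: "'u \<times> 'u \<Rightarrow> 'u" and m :: "'u lens"
  assumes i: "inj i"
  shows "transport_cat (i \<circ> prod.swap) (kernel_pair m) = transport_cat i (kernel_pair m)"
proof -
  have inv_swap: "inv (i \<circ> prod.swap) (i p) = prod.swap p" for p
    using inv_f_f[OF inj_compose[OF i inj_swap], of "prod.swap p"] by simp
  have "prod.swap ` Obj (kernel_pair m) = Obj (kernel_pair m)" "prod.swap ` Arr (kernel_pair m) = Arr (kernel_pair m)"
    by (auto simp: kernel_pair_def image_iff)
  then have Obj: "(i \<circ> prod.swap) ` Obj (kernel_pair m) = i ` Obj (kernel_pair m)"
    and Arr: "(i \<circ> prod.swap) ` Arr (kernel_pair m) = i ` Arr (kernel_pair m)"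
    by (metis image_comp)+
  show ?thesis
    unfolding transport_cat_def Obj Arr by (auto simp: fun_eq_iff inv_swap inv_f_f[OF i] kernel_pair_def)
qed

lemma kernel_proj_swap_simps:
  fixes i :: "'u \<times> 'u \<Rightarrow> 'u" and m :: "'u lens"
  assumes i: "inj i"
  shows "Src (kernel_proj (i \<circ> prod.swap) m) = Src (kernel_proj i m)"
    "p \<in> Obj (kernel_pair m) \<Longrightarrow> FO (kernel_proj (i \<circ> prod.swap) m) (i p) = snd p"
    "p \<in> Arr (kernel_pair m) \<Longrightarrow> FA (kernel_proj (i \<circ> prod.swap) m) (i p) = snd p"
    "(x, y) \<in> Obj (kernel_pair m) \<Longrightarrow> u \<in> Arr (Src m) \<Longrightarrow> Dom (Src m) u = y \<Longrightarrow>
      Put (kernel_proj (i \<circ> prod.swap) m) (i (x, y)) u = i (Put m x (FA m u), u)"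
proof -
  have j: "inj (i \<circ> prod.swap)" using inj_compose[OF i inj_swap] .
  show "Src (kernel_proj (i \<circ> prod.swap) m) = Src (kernel_proj i m)"
    using transport_cat_kernel_pair_swap[OF i] by (simp add: kernel_proj_simps[OF i] kernel_proj_simps[OF j])
  show "p \<in> Obj (kernel_pair m) \<Longrightarrow> FO (kernel_proj (i \<circ> prod.swap) m) (i p) = snd p"
    using kernel_proj_simps(3)[OF j, of "prod.swap p"] by (simp add: kernel_pair_simps)
  show "p \<in> Arr (kernel_pair m) \<Longrightarrow> FA (kernel_proj (i \<circ> prod.swap) m) (i p) = snd p"
    using kernel_proj_simps(4)[OF j, of "prod.swap p"] by (simp add: kernel_pair_simps)
  show "(x, y) \<in> Obj (kernel_pair m) \<Longrightarrow> u \<in> Arr (Src m) \<Longrightarrow> Dom (Src m) u = y \<Longrightarrow>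
      Put (kernel_proj (i \<circ> prod.swap) m) (i (x, y)) u = i (Put m x (FA m u), u)"
    using kernel_proj_simps(5)[OF j, of y x] by (simp add: kernel_pair_simps)
qed

lemma lcomp_kernel_proj_swap:
  fixes i :: "'u \<times> 'u \<Rightarrow> 'u" and m :: "'u lens"
  assumes m: "is_lens m" and i: "inj i"
  shows "lcomp m (kernel_proj i m) = lcomp m (kernel_proj (i \<circ> prod.swap) m)"
    (is "lcomp m ?p = lcomp m ?q")
proof (rule lens_eqI)
  note simps = kernel_proj_simps[OF i] kernel_proj_swap_simps[OF i] transport_cat_simps[OF i] kernel_pair_simps
  show "FO (lcomp m ?p) a = FO (lcomp m ?q) a" "FA (lcomp m ?p) a = FA (lcomp m ?q) a" for a
    by (auto simp: simps)
  show "Put (lcomp m ?p) a d = Put (lcomp m ?q) a d" for a d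
  proof (cases "a \<in> Obj (Src ?p) \<and> d \<in> Arr (Tgt m) \<and> Dom (Tgt m) d = FO m (FO ?p a)")
    case True
    then obtain x y where a: "a = i (x, y)" "(x, y) \<in> Obj (kernel_pair m)"
      and d: "d \<in> Arr (Tgt m)" "Dom (Tgt m) d = FO m x" by (auto simp: simps)
    then show ?thesis using lens_Put[OF m] lens_Dom_Put[OF m] lens_FA_Put[OF m] by (auto simp: simps)
  qed (auto simp: simps)
qed (simp_all add: kernel_proj_swap_simps(1)[OF i])

lemma lens_mono_imp_inj_on_FA:
  fixes i :: "'u \<times> 'u \<Rightarrow> 'u" and m :: "'u lens"
  assumes i: "inj i" and mono: "lens_mono m"
  shows "inj_on (FA m) (Arr (Src m))"
proof (rule inj_onI)
  fix u v assume "u \<in> Arr (Src m)" "v \<in> Arr (Src m)" "FA m u = FA m v"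
  then have uv: "(u, v) \<in> Arr (kernel_pair m)" by (simp add: kernel_pair_simps)
  have m: "is_lens m" using mono by (simp add: lens_mono_def)
  have "kernel_proj i m = kernel_proj (i \<circ> prod.swap) m"
    using lens_monoD[OF mono is_lens_kernel_proj[OF m i] is_lens_kernel_proj[OF m inj_compose[OF i inj_swap]]
        kernel_proj_swap_simps(1)[OF i, symmetric] _ _ lcomp_kernel_proj_swap[OF m i]]
    by (simp add: kernel_proj_def)
  then show "u = v"
    using arg_cong[of _ _ "\<lambda>L. FA L (i (u, v))"] uv kernel_proj_simps(4)[OF i] kernel_proj_swap_simps(3)[OF i]
    by force
qed

section \<open>Glued copies\<close>

text \<open>Two copies of Tgt e, tagged False and True, glued along the image S of e: objects of S carry
  only the tag False, and an arrow keeps its tag until its codomain enters S, which it never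
  leaves again.\<close>

definition glued_copies :: "'u lens \<Rightarrow> ('u \<times> bool) cat" where
  "glued_copies e = \<lparr>Obj = {(x, c). x \<in> Obj (Tgt e) \<and> (x \<in> FO e ` Obj (Src e) \<longrightarrow> \<not> c)},
     Arr = {(u, c). u \<in> Arr (Tgt e) \<and> (Dom (Tgt e) u \<in> FO e ` Obj (Src e) \<longrightarrow> \<not> c)},
     Dom = (\<lambda>(u, c). (Dom (Tgt e) u, c)),
     Cod = (\<lambda>(u, c). (Cod (Tgt e) u, c \<and> Cod (Tgt e) u \<notin> FO e ` Obj (Src e))),
     Idn = (\<lambda>(x, c). (Idn (Tgt e) x, c)),
     Comp = (\<lambda>(v, c') (u, c). (Comp (Tgt e) v u, c))\<rparr>"

lemma glued_copies_simps:
  "p \<in> Obj (glued_copies e) \<longleftrightarrow> fst p \<in> Obj (Tgt e) \<and> (fst p \<in> FO e ` Obj (Src e) \<longrightarrow> \<not> snd p)"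
  "q \<in> Arr (glued_copies e) \<longleftrightarrow> fst q \<in> Arr (Tgt e) \<and> (Dom (Tgt e) (fst q) \<in> FO e ` Obj (Src e) \<longrightarrow> \<not> snd q)"
  "Dom (glued_copies e) (u, c) = (Dom (Tgt e) u, c)"
  "Cod (glued_copies e) (u, c) = (Cod (Tgt e) u, c \<and> Cod (Tgt e) u \<notin> FO e ` Obj (Src e))"
  "Idn (glued_copies e) (x, c) = (Idn (Tgt e) x, c)"
  "Comp (glued_copies e) (v, c') (u, c) = (Comp (Tgt e) v u, c)"
  by (auto simp: glued_copies_def)

lemma category_laws_glued_copies:
  assumes e: "is_lens e"
  shows "category_laws (glued_copies e)"
proof -
  have B: "category (Tgt e)" using lens_Tgt[OF e] .
  note closed = lens_image_closed_Cod[OF e]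
  show ?thesis
  proof
    fix q r assume "q \<in> Arr (glued_copies e)" "r \<in> Arr (glued_copies e)"
      "Cod (glued_copies e) q = Dom (glued_copies e) r"
    then show "Comp (glued_copies e) r q \<in> Arr (glued_copies e)"
      "Cod (glued_copies e) (Comp (glued_copies e) r q) = Cod (glued_copies e) r"
      using closed by (auto simp: glued_copies_def cat_simps[OF B]) (metis image_eqI)+
  qed (use closed in \<open>auto simp: glued_copies_def cat_simps[OF B] cat_Comp_assoc[OF B]\<close>)
qed

definition copy_incl :: "('u \<times> bool \<Rightarrow> 'u) \<Rightarrow> 'u lens \<Rightarrow> bool \<Rightarrow> 'u lens" where
  "copy_incl j e c = \<lparr>Src = Tgt e, Tgt = transport_cat j (glued_copies e),
     FO = (\<lambda>x. if x \<in> Obj (Tgt e) then j (x, c \<and> x \<notin> FO e ` Obj (Src e)) else undefined),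
     FA = (\<lambda>u. if u \<in> Arr (Tgt e) then j (u, c \<and> Dom (Tgt e) u \<notin> FO e ` Obj (Src e)) else undefined),
     Put = (\<lambda>x k. if x \<in> Obj (Tgt e) \<and> k \<in> j ` Arr (glued_copies e) \<and>
                     Dom (transport_cat j (glued_copies e)) k = j (x, c \<and> x \<notin> FO e ` Obj (Src e))
                   then fst (inv j k) else undefined)\<rparr>"

lemma glued_copies_tag_Cod:
  assumes e: "is_lens e" and u: "u \<in> Arr (Tgt e)"
  shows "(c \<and> Dom (Tgt e) u \<notin> FO e ` Obj (Src e) \<and> Cod (Tgt e) u \<notin> FO e ` Obj (Src e)) =
    (c \<and> Cod (Tgt e) u \<notin> FO e ` Obj (Src e))"
  using lens_image_closed_Cod[OF e u] by blast

lemma copy_incl_Put_Comp: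
  fixes c :: bool
  assumes e: "is_lens e" and j: "inj j"
  defines "L \<equiv> copy_incl j e c"
  assumes x: "x \<in> Obj (Src L)" and k: "k \<in> Arr (Tgt L)" "Dom (Tgt L) k = FO L x"
    and k': "k' \<in> Arr (Tgt L)" "Dom (Tgt L) k' = FO L (Cod (Src L) (Put L x k))"
  shows "Put L x (Comp (Tgt L) k' k) = Comp (Src L) (Put L (Cod (Src L) (Put L x k)) k') (Put L x k)"
proof -
  let ?S = "FO e ` Obj (Src e)"
  have B: "category (Tgt e)" using lens_Tgt[OF e] .
  note simps = L_def copy_incl_def transport_cat_simps[OF j] glued_copies_simps inj_image_mem_iff[OF j]
    inj_eq[OF j] inv_f_f[OF j]
  from x k obtain u where x: "x \<in> Obj (Tgt e)" and k: "k = j (u, c \<and> x \<notin> ?S)"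
    and u: "u \<in> Arr (Tgt e)" "Dom (Tgt e) u = x"
    by (auto simp: simps)
  have Put_k: "Put L x k = u" using x k u by (simp add: simps)
  from k' obtain u' where k': "k' = j (u', c \<and> Cod (Tgt e) u \<notin> ?S)"
    and u': "u' \<in> Arr (Tgt e)" "Dom (Tgt e) u' = Cod (Tgt e) u"
    using Put_k cat_Cod[OF B u(1)] by (auto simp: simps)
  have "Comp (Tgt L) k' k = j (Comp (Tgt e) u' u, c \<and> x \<notin> ?S)"
    using k k' u u' glued_copies_tag_Cod[OF e u(1)] by (auto simp: simps)
  then show ?thesis using x u u' k' Put_k cat_simps[OF B] by (simp add: simps)
qed

lemma is_lens_copy_incl:
  assumes e: "is_lens e" and j: "inj j"
  shows "is_lens (copy_incl j e c)" (is "is_lens ?L")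
proof -
  let ?S = "FO e ` Obj (Src e)"
  have B: "category (Tgt e)" using lens_Tgt[OF e] .
  note simps = copy_incl_def transport_cat_simps[OF j] glued_copies_simps inj_image_mem_iff[OF j] inj_eq[OF j]
    inv_f_f[OF j]
  show ?thesis
  proof (rule lensI)
    show "category (Src ?L)" using B by (simp add: copy_incl_def)
    show "category (Tgt ?L)"
      using category_transport_cat[OF j category_laws_glued_copies[OF e]] by (simp add: copy_incl_def)
  next
    fix x assume "x \<in> Obj (Src ?L)"
    then have x: "x \<in> Obj (Tgt e)" by (simp add: copy_incl_def)
    show "FO ?L x \<in> Obj (Tgt ?L)" using x by (simp add: simps)
    show "FA ?L (Idn (Src ?L) x) = Idn (Tgt ?L) (FO ?L x)" using x cat_simps[OF B] by (simp add: simps)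
    show "Put ?L x (Idn (Tgt ?L) (FO ?L x)) = Idn (Src ?L) x" using x cat_simps[OF B] by (simp add: simps)
  next
    fix u assume "u \<in> Arr (Src ?L)"
    then have u: "u \<in> Arr (Tgt e)" by (simp add: copy_incl_def)
    show "FA ?L u \<in> Arr (Tgt ?L)" "Dom (Tgt ?L) (FA ?L u) = FO ?L (Dom (Src ?L) u)"
      "Cod (Tgt ?L) (FA ?L u) = FO ?L (Cod (Src ?L) u)"
      using u cat_simps[OF B] glued_copies_tag_Cod[OF e u] by (simp_all add: simps)
  next
    fix u v assume "u \<in> Arr (Src ?L)" "v \<in> Arr (Src ?L)" "Cod (Src ?L) u = Dom (Src ?L) v"
    then have uv: "u \<in> Arr (Tgt e)" "v \<in> Arr (Tgt e)" "Cod (Tgt e) u = Dom (Tgt e) v"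
      by (simp_all add: copy_incl_def)
    show "FA ?L (Comp (Src ?L) v u) = Comp (Tgt ?L) (FA ?L v) (FA ?L u)"
      using uv cat_simps[OF B] glued_copies_tag_Cod[OF e uv(1)] by (simp add: simps)
  next
    fix x k assume "x \<in> Obj (Src ?L)" "k \<in> Arr (Tgt ?L)" "Dom (Tgt ?L) k = FO ?L x"
    then obtain u where "x \<in> Obj (Tgt e)" "k = j (u, c \<and> x \<notin> ?S)" "u \<in> Arr (Tgt e)" "Dom (Tgt e) u = x"
      by (auto simp: simps)
    then show "Put ?L x k \<in> Arr (Src ?L)" "Dom (Src ?L) (Put ?L x k) = x" "FA ?L (Put ?L x k) = k"
      by (simp_all add: simps)
  next
    fix x k k' assume "x \<in> Obj (Src ?L)" "k \<in> Arr (Tgt ?L)" "k' \<in> Arr (Tgt ?L)"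
      "Dom (Tgt ?L) k = FO ?L x" "Dom (Tgt ?L) k' = FO ?L (Cod (Src ?L) (Put ?L x k))"
    then show "Put ?L x (Comp (Tgt ?L) k' k) = Comp (Src ?L) (Put ?L (Cod (Src ?L) (Put ?L x k)) k') (Put ?L x k)"
      using copy_incl_Put_Comp[OF e j] by blast
  qed (auto simp: copy_incl_def transport_cat_def)
qed

lemma lcomp_copy_incl:
  assumes e: "is_lens e"
  shows "lcomp (copy_incl j e c) e = lcomp (copy_incl j e c') e"
proof (rule lens_eqI)
  show "FO (lcomp (copy_incl j e c) e) x = FO (lcomp (copy_incl j e c') e) x" for x
    using lens_FO[OF e] by (simp add: copy_incl_def)
  show "FA (lcomp (copy_incl j e c) e) u = FA (lcomp (copy_incl j e c') e) u" for u
    using lens_FA[OF e] lens_Dom_FA[OF e] cat_Dom[OF lens_Src[OF e]] by (simp add: copy_incl_def)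
  show "Put (lcomp (copy_incl j e c) e) x k = Put (lcomp (copy_incl j e c') e) x k" for x k
    using lens_FO[OF e] by (simp add: copy_incl_def)
qed (simp_all add: copy_incl_def)

lemma lens_epi_imp_surj_on_Obj:
  fixes j :: "'u \<times> bool \<Rightarrow> 'u" and e :: "'u lens"
  assumes j: "inj j" and epi: "lens_epi e"
  shows "FO e ` Obj (Src e) = Obj (Tgt e)"
proof -
  have e: "is_lens e" using epi by (simp add: lens_epi_def)
  have copies_eq: "copy_incl j e False = copy_incl j e True"
    by (rule lens_epiD[OF epi is_lens_copy_incl[OF e j] is_lens_copy_incl[OF e j] _ _ _ lcomp_copy_incl[OF e]])
      (simp_all add: copy_incl_def)
  have "y \<in> FO e ` Obj (Src e)" if "y \<in> Obj (Tgt e)" for y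
    using arg_cong[OF copies_eq, of "\<lambda>L. FO L y"] that by (simp add: copy_incl_def inj_eq[OF j])
  then show ?thesis using lens_FO[OF e] by blast
qed

theorem corollary6p6:
  fixes e :: "'u lens"
  assumes "infinite (UNIV :: 'u set)"
    and "is_lens e"
  shows "(\<forall>m. lens_mono m \<longrightarrow> left_orth e m) \<longleftrightarrow> lens_epi e"
proof
  assume "\<forall>m. lens_mono m \<longrightarrow> left_orth e m"
  then show "lens_epi e"
    using surj_on_Obj_imp_lens_epi[OF assms(2)] left_orth_monos_imp_surj_on_Obj[OF assms(2)] by blast
next
  assume epi: "lens_epi e"
  obtain i :: "'u \<times> 'u \<Rightarrow> 'u" where i: "inj i"
    using inj_times_into_infinite[OF assms(1) ordLeq_refl[OF card_of_Card_order]] .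
  obtain j :: "'u \<times> bool \<Rightarrow> 'u" where j: "inj j"
    using inj_times_into_infinite[OF assms(1) card_of_finite_UNIV_ordLeq_infinite[OF assms(1)]] .
  have surj: "FO e ` Obj (Src e) = Obj (Tgt e)" using lens_epi_imp_surj_on_Obj[OF j epi] .
  show "\<forall>m. lens_mono m \<longrightarrow> left_orth e m"
  proof (intro allI impI)
    fix m :: "'u lens" assume mono: "lens_mono m"
    then have m: "is_lens m" by (simp add: lens_mono_def)
    show "left_orth e m"
      by (rule surj_on_Obj_inj_on_FA_imp_left_orth[OF assms(2) surj m lens_mono_imp_inj_on_FA[OF i mono]])
  qed
qed

end
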